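(* Assume $V=W$, that $\mathcal{A}$ is coercive, i.e. there is $\alpha>0$ with $\alpha\|\phi\|_W^2\le \mathcal{A}(\phi,\phi)$ for all $\phi\in W$, and that $W_\theta\cup S_\theta\subseteq V_\eta$. Let $(w^n_\theta)_{n\ge1}\subset W_\theta$ be a minimizing sequence, i.e. $\lim_{n\to\infty}\|u-w^n_\theta\|_{op,\eta}=\sigma^*:=\inf_{w_\theta\in W_\theta}\|u-w_\theta\|_{op,\eta}$. Then $(w^n_\theta)$ has a subsequence converging weakly in $W$ to some $u^*_\theta\in \mathrm{cl}^{seq}_w(W_\theta)$, and every such weak limit satisfies $$\|u-u^*_\theta\|_{op,\eta}\le \inf_{w_\theta\in W_\theta}\|u-w_\theta\|_{op,\eta}.$$
   Context: $W$ and $V$ are reflexive separable real Banach spaces. $\mathcal{A}:W\times V\to\mathbb{R}$ is a bilinear form with $\mathcal{A}(w,v)\le M\|w\|_W\|v\|_V$ for all $w\in W,v\in V$, and $\mathcal{F}:V\to\mathbb{R}$ is a bounded linear functional. It is assumed that there is a unique $u\in W$ with $\mathcal{A}(u,v)=\mathcal{F}(v)$ for all $v\in V$. $W_\theta\subseteq W$ and $V_\eta\subseteq V$ are arbitrary subsets ("function classes", e.g. neural network classes), with $V_\eta$ containing an element of nonzero norm. For $w\in W$, $\|w\|_{op,\eta}:=\sup_{v_\eta\in V_\eta,\ \|v_\eta\|_V\neq0}\mathcal{A}(w,v_\eta)/\|v_\eta\|_V$. $S_\theta:=\{w_1-w_2:\ w_1,w_2\in W_\theta\}$. $\mathrm{cl}^{seq}_w(W_\theta)\subseteq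 W$ denotes the weak sequential closure of $W_\theta$ in $W$, i.e. the set of all weak limits in $W$ of sequences of elements of $W_\theta$. *)

theory Defs
  imports "HOL-Analysis.Analysis" "HOL-Library.Extended_Real"
begin

definition weak_conv :: "(nat \<Rightarrow> 'a::real_normed_vector) \<Rightarrow> 'a \<Rightarrow> bool" where
  "weak_conv x L \<longleftrightarrow> (\<forall>f::'a \<Rightarrow> real. bounded_linear f \<longrightarrow> (\<lambda>n. f (x n)) \<longlonglongrightarrow> f L)"

definition weak_seq_closure :: "'a::real_normed_vector set \<Rightarrow> 'a set" where
  "weak_seq_closure S = {x. \<exists>s. (\<forall>n. s n \<in> S) \<and> weak_conv s x}"

definition reflexive_space :: "'a::real_normed_vector itself \<Rightarrow> bool" where
  "reflexive_space _ \<longleftrightarrow>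
     (\<forall>\<phi> :: ('a \<Rightarrow>\<^sub>L real) \<Rightarrow>\<^sub>L real. \<exists>x::'a. \<forall>f. blinfun_apply \<phi> f = blinfun_apply f x)"

definition separable_space :: "'a::real_normed_vector itself \<Rightarrow> bool" where
  "separable_space _ \<longleftrightarrow> (\<exists>D::'a set. countable D \<and> closure D = UNIV)"

definition op_norm_eta :: "('a \<Rightarrow> 'b::real_normed_vector \<Rightarrow> real) \<Rightarrow> 'b set \<Rightarrow> 'a \<Rightarrow> real" where
  "op_norm_eta A V\<^sub>\<eta> w = (SUP v\<in>{v\<in>V\<^sub>\<eta>. norm v \<noteq> 0}. A w v / norm v)"

definition diff_set :: "'a::ab_group_add set \<Rightarrow> 'a set" where
  "diff_set W = {w1 - w2 | w1 w2. w1 \<in> W \<and> w2 \<in> W}"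

end

theory Submission
  imports Defs "HOL-Library.Diagonal_Subsequence"
begin

text \<open>A coercive bounded bilinear form makes the space a Hilbert space in disguise: its
  symmetric part \<open>A z y + A y z\<close> is an equivalent inner product, and it represents every bounded
  linear functional \<open>f\<close> (the representer minimises the energy \<open>A y y - f y\<close>, and minimising
  sequences are Cauchy by the parallelogram identity). Testing bounded sequences against a
  countable dense set and extracting a diagonal subsequence then gives weak sequential
  compactness.
  Because \<open>S\<^sub>\<theta> \<subseteq> V\<^sub>\<eta>\<close>, coercivity bounds \<open>\<alpha> \<parallel>w\<^sub>m - w\<^sub>n\<parallel>\<close> by the discrete dual norm, so a
  minimising sequence is bounded; and the discrete dual norm, a supremum of weakly continuous
  functionals, is weakly sequentially lower semicontinuous.\<close>

lemma bounded_bilinear_of_linear: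
  fixes A :: "'a::real_normed_vector \<Rightarrow> 'b::real_normed_vector \<Rightarrow> real"
  assumes lin_right: "\<And>x. linear (A x)"
    and lin_left: "\<And>y. linear (\<lambda>x. A x y)"
    and bound: "\<And>x y. A x y \<le> M * norm x * norm y"
  shows "bounded_bilinear A"
proof
  have "\<bar>A x y\<bar> \<le> M * norm x * norm y" for x y
    using bound[of x y] bound[of "-x" y] linear_neg[OF lin_left[of y]] by simp
  then show "\<exists>K. \<forall>x y. norm (A x y) \<le> norm x * norm y * K"
    by (intro exI[of _ M]) (simp add: algebra_simps)
qed (simp_all add: linear_add[OF lin_right] linear_add[OF lin_left]
                   linear_scale[OF lin_right] linear_scale[OF lin_left])

lemma bounded_bilinear_symmetrize:
  assumes "bounded_bilinear A"
  shows "bounded_bilinear (\<lambda>x y. A x y + A y x)"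
proof -
  interpret A: bounded_bilinear A by fact
  obtain K where K: "\<And>x y. norm (A x y) \<le> norm x * norm y * K" using A.bounded by blast
  show ?thesis
  proof
    have "norm (A x y + A y x) \<le> norm x * norm y * (2 * K)" for x y
      using norm_triangle_ineq[of "A x y" "A y x"] K[of x y] K[of y x] by (simp add: algebra_simps)
    then show "\<exists>K'. \<forall>x y. norm (A x y + A y x) \<le> norm x * norm y * K'" by blast
  qed (simp_all add: A.add_left A.add_right A.scaleR_left A.scaleR_right algebra_simps)
qed

lemma linear_coeff_eq_0_if_quadratic_nonneg:
  fixes b c :: real
  assumes nonneg: "\<And>t. 0 \<le> t * c + t\<^sup>2 * b" and "b \<ge> 0"
  shows "c = 0"
proof (rule ccontr)
  assume "c \<noteq> 0"
  define t where "t = - c / (b + 1)"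
  have "t * c + t\<^sup>2 * b = - c\<^sup>2 / (b + 1)\<^sup>2"
    using \<open>b \<ge> 0\<close> unfolding t_def by (simp add: power2_eq_square divide_simps) (simp add: algebra_simps)
  also have "\<dots> < 0" using \<open>c \<noteq> 0\<close> \<open>b \<ge> 0\<close> by simp
  finally show False using nonneg[of t] by simp
qed

lemma bounded_bilinear_convergent_subsequence_on_countable:
  fixes a :: "'a::real_normed_vector \<Rightarrow> 'b::real_normed_vector \<Rightarrow> real" and x :: "nat \<Rightarrow> 'a"
  assumes a: "bounded_bilinear a" and x_bound: "\<And>n. norm (x n) \<le> B" and "countable D"
  shows "\<exists>r. strict_mono r \<and> (\<forall>y\<in>D. convergent (\<lambda>i. a (x (r i)) y))"
proof (cases "D = {}")
  case True
  show ?thesis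
    using True strict_mono_id by (intro exI[where x = id]) simp
next
  case False
  interpret a: bounded_bilinear a by (rule a)
  obtain K where K: "\<And>p q. norm (a p q) \<le> norm p * norm q * K" "K > 0"
    using a.pos_bounded by blast
  define d where "d = from_nat_into D"
  have range_d: "range d = D" unfolding d_def using False \<open>countable D\<close> by simp
  interpret S: subseqs "\<lambda>k s. convergent (\<lambda>i. a (x (s i)) (d k))"
  proof
    fix k and s :: "nat \<Rightarrow> nat"
    have "norm (a (x (s i)) (d k)) \<le> B * norm (d k) * K" for i
      using K(1)[of "x (s i)" "d k"] x_bound[of "s i"] \<open>K > 0\<close>
      by (meson order_trans mult_right_mono norm_ge_zero less_imp_le)
    then have "bounded (range (\<lambda>i. a (x (s i)) (d k)))"
      unfolding bounded_iff by blast
    then obtain r l where "strict_mono r" "((\<lambda>i. a (x (s i)) (d k)) \<circ> r) \<longlonglongrightarrow> l"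
      using bounded_imp_convergent_subsequence by blast
    then show "\<exists>r. strict_mono r \<and> convergent (\<lambda>i. a (x ((s \<circ> r) i)) (d k))"
      unfolding convergent_def o_def by blast
  qed
  have "convergent (\<lambda>i. a (x (S.diagseq i)) (d k))" for k
  proof -
    have "convergent (\<lambda>i. a (x ((S.diagseq \<circ> (+) (Suc k)) i)) (d k))"
    proof (rule S.diagseq_holds)
      fix r s n assume "strict_mono (r :: nat \<Rightarrow> nat)" "convergent (\<lambda>i. a (x (s i)) (d n))"
      from convergent_subseq_convergent[OF this(2,1)]
      show "convergent (\<lambda>i. a (x ((s \<circ> r) i)) (d n))" by (simp add: o_def)
    qed
    then show ?thesis
      using convergent_ignore_initial_segment[of "\<lambda>i. a (x (S.diagseq i)) (d k)" "Suc k"]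
      by (simp add: o_def add.commute)
  qed
  then show ?thesis using S.subseq_diagseq range_d by blast
qed

lemma bounded_bilinear_convergent_on_dense:
  fixes a :: "'a::real_normed_vector \<Rightarrow> 'b::real_normed_vector \<Rightarrow> real" and x :: "nat \<Rightarrow> 'a"
  assumes a: "bounded_bilinear a" and x_bound: "\<And>n. norm (x n) \<le> B"
    and dense: "closure D = UNIV" and conv_D: "\<And>q. q \<in> D \<Longrightarrow> convergent (\<lambda>i. a (x i) q)"
  shows "convergent (\<lambda>i. a (x i) y)"
proof -
  interpret a: bounded_bilinear a by (rule a)
  obtain K where K: "\<And>p q. norm (a p q) \<le> norm p * norm q * K" and "K > 0"
    using a.pos_bounded by blast
  have "B \<ge> 0" using x_bound[of 0] norm_ge_zero[of "x 0"] by linarith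
  have "Cauchy (\<lambda>i. a (x i) y)"
  proof (rule CauchyI)
    fix e :: real assume "e > 0"
    define \<delta> where "\<delta> = e / (3 * (B * K + 1))"
    have "B * K + 1 > 0" using \<open>B \<ge> 0\<close> \<open>K > 0\<close> by (simp add: add_nonneg_pos)
    then have "\<delta> > 0" unfolding \<delta>_def using \<open>e > 0\<close> by simp
    then obtain q where "q \<in> D" and q_near: "dist q y < \<delta>"
      using dense closure_approachable by blast
    have near: "norm (a (x i) (y - q)) \<le> e / 3" for i
    proof -
      have "norm (x i) * norm (y - q) \<le> B * \<delta>"
        using x_bound[of i] q_near \<open>B \<ge> 0\<close>
        by (intro mult_mono) (auto simp: dist_norm norm_minus_commute)
      then have "norm (x i) * norm (y - q) * K \<le> B * \<delta> * K"
        using \<open>K > 0\<close> by (simp add: mult_right_mono)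
      with K[of "x i" "y - q"] have "norm (a (x i) (y - q)) \<le> B * \<delta> * K" by linarith
      also have "\<dots> \<le> (B * K + 1) * \<delta>" using \<open>\<delta> > 0\<close> by (simp add: algebra_simps)
      also have "\<dots> = e / 3" unfolding \<delta>_def using \<open>B * K + 1 > 0\<close> by (simp add: divide_simps)
      finally show ?thesis .
    qed
    have "Cauchy (\<lambda>i. a (x i) q)" using conv_D[OF \<open>q \<in> D\<close>] Cauchy_convergent_iff by blast
    with \<open>e > 0\<close> obtain N where N: "\<forall>m\<ge>N. \<forall>n\<ge>N. norm (a (x m) q - a (x n) q) < e / 3"
      using CauchyD[of _ "e / 3"] by (meson divide_pos_pos zero_less_numeral)
    have "norm (a (x m) y - a (x n) y) < e" if "m \<ge> N" "n \<ge> N" for m n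
    proof -
      have "a (x m) y - a (x n) y = a (x m) (y - q) + (a (x m) q - a (x n) q) - a (x n) (y - q)"
        by (simp add: a.diff_right)
      moreover have "\<bar>a (x m) q - a (x n) q\<bar> < e / 3" using N that by simp
      ultimately show ?thesis using near[of m] near[of n] unfolding real_norm_def by linarith
    qed
    then show "\<exists>N. \<forall>m\<ge>N. \<forall>n\<ge>N. norm (a (x m) y - a (x n) y) < e" by blast
  qed
  then show ?thesis using Cauchy_convergent_iff by blast
qed

lemma bounded_linear_pointwise_limit:
  fixes f :: "nat \<Rightarrow> 'a::real_normed_vector \<Rightarrow> 'b::real_normed_vector"
  assumes lin: "\<And>i. linear (f i)" and bound: "\<And>i y. norm (f i y) \<le> norm y * K"
    and lim: "\<And>y. (\<lambda>i. f i y) \<longlonglongrightarrow> g y"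
  shows "bounded_linear g"
proof (rule bounded_linear_intro[where K = K])
  fix y y'
  have "(\<lambda>i. f i (y + y')) \<longlonglongrightarrow> g y + g y'"
    unfolding linear_add[OF lin] by (intro tendsto_add lim)
  then show "g (y + y') = g y + g y'" using lim LIMSEQ_unique by blast
next
  fix c y
  have "(\<lambda>i. f i (c *\<^sub>R y)) \<longlonglongrightarrow> c *\<^sub>R g y"
    unfolding linear_scale[OF lin] by (intro tendsto_scaleR tendsto_const lim)
  then show "g (c *\<^sub>R y) = c *\<^sub>R g y" using lim LIMSEQ_unique by blast
next
  fix y
  show "norm (g y) \<le> norm y * K"
    using tendsto_norm[OF lim[of y]] bound by (intro LIMSEQ_le_const2) auto
qed

lemma weak_conv_diff_const:
  assumes "weak_conv x l"
  shows "weak_conv (\<lambda>n. c - x n) (c - l)"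
  unfolding weak_conv_def
proof (intro allI impI)
  fix f :: "'a \<Rightarrow> real" assume f: "bounded_linear f"
  then have "(\<lambda>n. f c - f (x n)) \<longlonglongrightarrow> f c - f l"
    using assms unfolding weak_conv_def by (intro tendsto_diff tendsto_const) blast
  then show "(\<lambda>n. f (c - x n)) \<longlonglongrightarrow> f (c - l)"
    by (simp add: linear_diff[OF bounded_linear.linear[OF f]])
qed

lemma op_norm_eta_upper:
  assumes "bounded_bilinear A" and "v \<in> V" and "norm v \<noteq> 0"
  shows "A x v / norm v \<le> op_norm_eta A V x"
proof -
  interpret A: bounded_bilinear A by fact
  obtain K where K: "\<And>x v. norm (A x v) \<le> norm x * norm v * K" using A.bounded by blast
  have "A x v' / norm v' \<le> norm x * K" if "norm v' \<noteq> 0" for v'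
    using K[of x v'] that by (simp add: divide_le_eq algebra_simps)
  then have "bdd_above ((\<lambda>v. A x v / norm v) ` {v \<in> V. norm v \<noteq> 0})"
    by (intro bdd_aboveI2[of _ _ "norm x * K"]) auto
  then show ?thesis unfolding op_norm_eta_def using assms(2,3) by (intro cSUP_upper) auto
qed

lemma op_norm_eta_least:
  assumes "\<exists>v\<in>V. norm v \<noteq> 0" and "\<And>v. v \<in> V \<Longrightarrow> norm v \<noteq> 0 \<Longrightarrow> A x v / norm v \<le> c"
  shows "op_norm_eta A V x \<le> c"
  unfolding op_norm_eta_def using assms by (intro cSUP_least) auto

lemma op_norm_eta_add:
  assumes A: "bounded_bilinear A" and V: "\<exists>v\<in>V. norm v \<noteq> 0"
  shows "op_norm_eta A V (x + y) \<le> op_norm_eta A V x + op_norm_eta A V y"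
proof (rule op_norm_eta_least[OF V])
  fix v assume "v \<in> V" "norm v \<noteq> 0"
  then show "A (x + y) v / norm v \<le> op_norm_eta A V x + op_norm_eta A V y"
    using op_norm_eta_upper[OF A, of v V x] op_norm_eta_upper[OF A, of v V y]
    by (simp add: bounded_bilinear.add_left[OF A] add_divide_distrib)
qed

lemma op_norm_eta_weak_lsc:
  assumes A: "bounded_bilinear A" and V: "\<exists>v\<in>V. norm v \<noteq> 0"
    and weak: "weak_conv x l" and lim: "(\<lambda>n. ereal (op_norm_eta A V (x n))) \<longlonglongrightarrow> L"
  shows "ereal (op_norm_eta A V l) \<le> L"
proof -
  have quotient_le: "ereal (A l v / norm v) \<le> L" if "v \<in> V" "norm v \<noteq> 0" for v
  proof -
    have "(\<lambda>n. A (x n) v) \<longlonglongrightarrow> A l v"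
      using weak bounded_bilinear.bounded_linear_left[OF A] unfolding weak_conv_def by blast
    then have conv: "(\<lambda>n. ereal (A (x n) v / norm v)) \<longlonglongrightarrow> ereal (A l v / norm v)"
      by (intro tendsto_ereal tendsto_divide tendsto_const) (use that in auto)
    have "\<forall>n. ereal (A (x n) v / norm v) \<le> ereal (op_norm_eta A V (x n))"
      using op_norm_eta_upper[OF A that] by simp
    then show ?thesis using LIMSEQ_le[OF conv lim] by blast
  qed
  show ?thesis
  proof (cases L)
    case (real c)
    then show ?thesis using quotient_le op_norm_eta_least[OF V, of A l c] by simp
  next
    case MInf
    then show ?thesis using quotient_le V by fastforce
  qed simp
qed

locale coercive_form =
  fixes A :: "'a::banach \<Rightarrow> 'a \<Rightarrow> real" and \<alpha> :: real
  assumes bounded_bilinear: "bounded_bilinear A"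
    and pos: "\<alpha> > 0"
    and coercive: "\<And>\<phi>. \<alpha> * (norm \<phi>)\<^sup>2 \<le> A \<phi> \<phi>"
begin

sublocale A: bounded_bilinear A by (rule bounded_bilinear)

lemma diagonal_nonneg: "0 \<le> A v v"
  using coercive[of v] pos by (meson order_trans mult_nonneg_nonneg zero_le_power2 less_imp_le)

lemma energy_bounded_below:
  assumes "bounded_linear f"
  shows "\<exists>c. \<forall>y. c \<le> A y y - f y"
proof -
  interpret f: bounded_linear f by fact
  obtain K where K: "\<And>y. norm (f y) \<le> norm y * K" using f.bounded by blast
  have "- K\<^sup>2 / (4 * \<alpha>) \<le> A y y - f y" for y
  proof -
    have "0 \<le> (2 * \<alpha> * norm y - K)\<^sup>2" by simp
    then have "- K\<^sup>2 / (4 * \<alpha>) \<le> \<alpha> * (norm y)\<^sup>2 - norm y * K"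
      using pos by (simp add: field_simps power2_eq_square)
    also have "\<dots> \<le> A y y - f y"
      using coercive[of y] abs_le_D1[OF K[of y, unfolded real_norm_def]] by linarith
    finally show ?thesis .
  qed
  then show ?thesis by blast
qed

lemma energy_parallelogram:
  assumes "bounded_linear f"
  shows "(A p p - f p) + (A q q - f q) - 2 * (A ((1/2) *\<^sub>R (p + q)) ((1/2) *\<^sub>R (p + q)) - f ((1/2) *\<^sub>R (p + q)))
    = A (p - q) (p - q) / 2"
  using assms
  by (simp add: A.add_left A.add_right A.diff_left A.diff_right A.scaleR_left A.scaleR_right
      linear_add linear_scale bounded_linear.linear algebra_simps)

lemma energy_minimizing_sequence_Cauchy:
  assumes f: "bounded_linear f" and lower: "\<And>y. m \<le> A y y - f y"
    and y: "\<And>n. A (y n) (y n) - f (y n) < m + 1 / (real n + 1)"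
  shows "Cauchy y"
proof (rule CauchyI)
  have close: "\<alpha> / 2 * (norm (p - q))\<^sup>2 \<le> (A p p - f p) + (A q q - f q) - 2 * m" for p q
    using coercive[of "p - q"] energy_parallelogram[OF f, of p q] lower[of "(1/2) *\<^sub>R (p + q)"]
    by simp
  fix e :: real assume "e > 0"
  obtain N :: nat where N: "real N > 4 / (\<alpha> * e\<^sup>2)" using reals_Archimedean2 by blast
  moreover have "4 / (\<alpha> * e\<^sup>2) > 0" using pos \<open>e > 0\<close> by simp
  ultimately have "real N > 0" by linarith
  have "norm (y k - y l) < e" if "k \<ge> N" "l \<ge> N" for k l
  proof -
    have "1 / (real k + 1) < 1 / real N" "1 / (real l + 1) < 1 / real N"
      using that \<open>real N > 0\<close> by (simp_all add: frac_less2)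
    then have "\<alpha> / 2 * (norm (y k - y l))\<^sup>2 < 2 / real N"
      using close[of "y k" "y l"] y[of k] y[of l] by linarith
    also have "2 / real N < \<alpha> / 2 * e\<^sup>2"
      using N \<open>real N > 0\<close> pos \<open>e > 0\<close> by (simp add: field_simps)
    finally have "(norm (y k - y l))\<^sup>2 < e\<^sup>2" using pos by simp
    then show ?thesis using \<open>e > 0\<close> by (simp add: power_less_imp_less_base)
  qed
  then show "\<exists>N. \<forall>k\<ge>N. \<forall>l\<ge>N. norm (y k - y l) < e" by blast
qed

lemma energy_has_minimizer:
  assumes f: "bounded_linear f"
  shows "\<exists>z. \<forall>y. A z z - f z \<le> A y y - f y"
proof -
  define J where "J y = A y y - f y" for y
  define m where "m = Inf (range J)"
  have bdd: "bdd_below (range J)"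
    using energy_bounded_below[OF f] unfolding J_def bdd_below_def by blast
  have m_le: "m \<le> J y" for y unfolding m_def using bdd by (simp add: cInf_lower)
  have "\<exists>y. J y < m + 1 / (real n + 1)" for n
  proof -
    have "Inf (range J) < m + 1 / (real n + 1)" unfolding m_def by simp
    then show ?thesis by (subst (asm) cInf_less_iff) (use bdd in auto)
  qed
  then obtain y where y: "\<And>n. J (y n) < m + 1 / (real n + 1)" by metis
  then have "Cauchy y"
    using energy_minimizing_sequence_Cauchy[OF f, of m] m_le unfolding J_def by blast
  then obtain z where "y \<longlonglongrightarrow> z" using Cauchy_convergent_iff convergent_def by blast
  then have "(\<lambda>n. J (y n)) \<longlonglongrightarrow> J z"
    unfolding J_def by (intro tendsto_intros A.tendsto bounded_linear.tendsto[OF f])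
  moreover have "(\<lambda>n. J (y n)) \<longlonglongrightarrow> m"
  proof (rule tendsto_sandwich[of "\<lambda>n. m" _ _ "\<lambda>n. m + 1 / (real n + 1)"])
    have "(\<lambda>n. m + inverse (real (Suc n))) \<longlonglongrightarrow> m" by (rule LIMSEQ_inverse_real_of_nat_add)
    then show "(\<lambda>n. m + 1 / (real n + 1)) \<longlonglongrightarrow> m" by (simp add: inverse_eq_divide add.commute)
  qed (auto intro!: always_eventually m_le less_imp_le[OF y])
  ultimately have "J z = m" using LIMSEQ_unique by blast
  then show ?thesis using m_le unfolding J_def by metis
qed

text \<open>The minimiser of the energy satisfies the Euler--Lagrange equation of the symmetric part.\<close>
lemma symmetric_part_represents:
  assumes f: "bounded_linear f"
  shows "\<exists>z. \<forall>y. f y = A z y + A y z"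
proof -
  obtain z where z: "\<And>y. A z z - f z \<le> A y y - f y" using energy_has_minimizer[OF f] by blast
  have "f v = A z v + A v z" for v
  proof -
    have "0 \<le> t * (A z v + A v z - f v) + t\<^sup>2 * A v v" for t
    proof -
      have "(A (z + t *\<^sub>R v) (z + t *\<^sub>R v) - f (z + t *\<^sub>R v)) - (A z z - f z)
          = t * (A z v + A v z - f v) + t\<^sup>2 * A v v"
        using f by (simp add: A.add_left A.add_right A.scaleR_left A.scaleR_right linear_add
            linear_scale bounded_linear.linear algebra_simps power2_eq_square)
      then show ?thesis using z[of "z + t *\<^sub>R v"] by simp
    qed
    then have "A z v + A v z - f v = 0"
      using diagonal_nonneg by (rule linear_coeff_eq_0_if_quadratic_nonneg)
    then show ?thesis by simp
  qed
  then show ?thesis by blast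
qed

lemma weakly_convergent_subsequence:
  fixes x :: "nat \<Rightarrow> 'a"
  assumes sep: "separable_space TYPE('a)" and x_bound: "\<And>n. norm (x n) \<le> B"
  shows "\<exists>r z. strict_mono r \<and> weak_conv (x \<circ> r) z"
proof -
  define a where "a p q = A p q + A q p" for p q
  have a: "bounded_bilinear a" unfolding a_def by (rule bounded_bilinear_symmetrize[OF bounded_bilinear])
  interpret a: bounded_bilinear a by (rule a)
  obtain K where K: "\<And>p q. norm (a p q) \<le> norm p * norm q * K" "K > 0" using a.pos_bounded by blast
  obtain D :: "'a set" where "countable D" "closure D = UNIV"
    using sep unfolding separable_space_def by blast
  obtain r where r: "strict_mono r" and conv_D: "\<forall>y\<in>D. convergent (\<lambda>i. a (x (r i)) y)"
    using bounded_bilinear_convergent_subsequence_on_countable[where x = x, OF a x_bound \<open>countable D\<close>] by blast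
  have xr_bound: "norm ((x \<circ> r) n) \<le> B" for n using x_bound by simp
  have "convergent (\<lambda>i. a ((x \<circ> r) i) y)" for y
  proof (rule bounded_bilinear_convergent_on_dense[OF a xr_bound \<open>closure D = UNIV\<close>])
    show "convergent (\<lambda>i. a ((x \<circ> r) i) q)" if "q \<in> D" for q using conv_D that by (simp add: o_def)
  qed
  then obtain g where g: "\<And>y. (\<lambda>i. a ((x \<circ> r) i) y) \<longlonglongrightarrow> g y"
    unfolding convergent_def by metis
  have "norm (a ((x \<circ> r) i) y) \<le> norm y * (B * K)" for i y
  proof -
    have "norm ((x \<circ> r) i) * norm y * K \<le> B * norm y * K"
      using xr_bound[of i] K(2) by (intro mult_right_mono) simp_all
    then show ?thesis using K(1)[of "(x \<circ> r) i" y] by (simp add: algebra_simps)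
  qed
  then have "bounded_linear g"
    using bounded_linear_pointwise_limit[OF bounded_linear.linear[OF a.bounded_linear_right] _ g] by blast
  then obtain z where z: "\<And>y. g y = a z y" using symmetric_part_represents unfolding a_def by blast
  have "weak_conv (x \<circ> r) z"
    unfolding weak_conv_def
  proof (intro allI impI)
    fix f :: "'a \<Rightarrow> real" assume "bounded_linear f"
    then obtain w where w: "\<And>y. f y = a y w" using symmetric_part_represents unfolding a_def
      by (metis add.commute)
    show "(\<lambda>n. f ((x \<circ> r) n)) \<longlonglongrightarrow> f z"
      using g[of w] unfolding w z a_def by (simp add: add.commute)
  qed
  then show ?thesis using r by blast
qed

lemma eventually_bounded_weakly_convergent_subsequence:
  fixes x :: "nat \<Rightarrow> 'a"
  assumes sep: "separable_space TYPE('a)" and "eventually (\<lambda>n. norm (x n) \<le> B) sequentially"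
  shows "\<exists>r z. strict_mono r \<and> weak_conv (x \<circ> r) z"
proof -
  obtain N where "\<forall>n\<ge>N. norm (x n) \<le> B" using assms(2) unfolding eventually_sequentially by blast
  then have "\<And>n. norm (x (n + N)) \<le> B" by simp
  then obtain r z where "strict_mono r" "weak_conv ((\<lambda>n. x (n + N)) \<circ> r) z"
    using weakly_convergent_subsequence[OF sep, of "\<lambda>n. x (n + N)" B] by blast
  moreover have "strict_mono (\<lambda>n. r n + N)" using \<open>strict_mono r\<close> by (simp add: strict_mono_def)
  ultimately show ?thesis by (auto simp: o_def)
qed

lemma op_norm_eta_coercive:
  assumes "d \<in> V" and "\<exists>v\<in>V. norm v \<noteq> 0"
  shows "\<alpha> * norm d \<le> op_norm_eta A V d"
proof (cases "d = 0")
  case True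
  then show ?thesis
    using op_norm_eta_upper[OF bounded_bilinear, of _ V 0] assms(2) by (auto simp: A.zero_left)
next
  case False
  then have "\<alpha> * norm d = \<alpha> * (norm d)\<^sup>2 / norm d" by (simp add: power2_eq_square)
  also have "\<dots> \<le> A d d / norm d" using coercive[of d] by (simp add: divide_right_mono)
  also have "\<dots> \<le> op_norm_eta A V d"
    using False assms(1) by (intro op_norm_eta_upper[OF bounded_bilinear]) auto
  finally show ?thesis .
qed

lemma bounded_if_op_norm_eta_bounded:
  assumes V: "\<exists>v\<in>V. norm v \<noteq> 0" and diff: "\<And>m n. w m - w n \<in> V"
    and lim: "(\<lambda>n. ereal (op_norm_eta A V (u - w n))) \<longlonglongrightarrow> L" and "L \<noteq> \<infinity>"
  shows "\<exists>B. eventually (\<lambda>n. norm (w n) \<le> B) sequentially"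
proof -
  obtain c where "L < ereal c"
  proof (cases L)
    case (real r)
    then show ?thesis using that[of "r + 1"] by simp
  qed (use that[of 0] \<open>L \<noteq> \<infinity>\<close> in auto)
  with lim have "eventually (\<lambda>n. op_norm_eta A V (u - w n) < c) sequentially"
    by (auto dest: order_tendstoD(2))
  moreover have "norm (w n) \<le> norm (w 0) + (c + op_norm_eta A V (w 0 - u)) / \<alpha>"
    if "op_norm_eta A V (u - w n) < c" for n
  proof -
    have "\<alpha> * norm (w 0 - w n) \<le> op_norm_eta A V (w 0 - w n)"
      using op_norm_eta_coercive[OF diff V] .
    also have "\<dots> \<le> op_norm_eta A V (u - w n) + op_norm_eta A V (w 0 - u)"
      using op_norm_eta_add[OF bounded_bilinear V, of "u - w n" "w 0 - u"] by simp
    finally have "norm (w 0 - w n) \<le> (c + op_norm_eta A V (w 0 - u)) / \<alpha>"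
      using that pos by (simp add: le_divide_eq mult.commute)
    then show ?thesis using norm_triangle_ineq4[of "w 0" "w 0 - w n"] by simp
  qed
  ultimately have "eventually (\<lambda>n. norm (w n) \<le> norm (w 0) + (c + op_norm_eta A V (w 0 - u)) / \<alpha>)
      sequentially"
    by (rule eventually_mono)
  then show ?thesis by blast
qed

end

theorem lemma1:
  fixes A :: "'a::banach \<Rightarrow> 'a \<Rightarrow> real"
    and F :: "'a \<Rightarrow> real"
    and u :: 'a
    and M \<alpha> :: real
    and W\<^sub>\<theta> V\<^sub>\<eta> :: "'a set"
    and w :: "nat \<Rightarrow> 'a"
  assumes refl: "reflexive_space TYPE('a)"
    and sep: "separable_space TYPE('a)"
    and bilin1: "\<And>x. linear (A x)"
    and bilin2: "\<And>y. linear (\<lambda>x. A x y)"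
    and bounded: "\<And>x y. A x y \<le> M * norm x * norm y"
    and F_lin: "bounded_linear F"
    and u_sol: "\<And>v. A u v = F v"
    and u_uniq: "\<And>u'. (\<forall>v. A u' v = F v) \<Longrightarrow> u' = u"
    and alpha_pos: "\<alpha> > 0"
    and coercive: "\<And>\<phi>. \<alpha> * (norm \<phi>)\<^sup>2 \<le> A \<phi> \<phi>"
    and V_nonzero: "\<exists>v\<in>V\<^sub>\<eta>. norm v \<noteq> 0"
    and subset: "W\<^sub>\<theta> \<union> diff_set W\<^sub>\<theta> \<subseteq> V\<^sub>\<eta>"
    and w_in: "\<And>n. w n \<in> W\<^sub>\<theta>"
    and minimizing: "(\<lambda>n. ereal (op_norm_eta A V\<^sub>\<eta> (u - w n)))
                      \<longlonglongrightarrow> (INF x\<in>W\<^sub>\<theta>. ereal (op_norm_eta A V\<^sub>\<eta> (u - x)))"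
  shows "(\<exists>r u\<^sub>s. strict_mono r \<and> u\<^sub>s \<in> weak_seq_closure W\<^sub>\<theta> \<and> weak_conv (w \<circ> r) u\<^sub>s)
       \<and> (\<forall>r u\<^sub>s. strict_mono r \<and> weak_conv (w \<circ> r) u\<^sub>s \<longrightarrow>
            ereal (op_norm_eta A V\<^sub>\<eta> (u - u\<^sub>s)) \<le> (INF x\<in>W\<^sub>\<theta>. ereal (op_norm_eta A V\<^sub>\<eta> (u - x))))"
proof -
  have bb: "bounded_bilinear A" using bilin1 bilin2 bounded by (rule bounded_bilinear_of_linear)
  interpret coercive_form A \<alpha> by (rule coercive_form.intro[OF bb alpha_pos coercive])
  let ?\<sigma> = "INF x\<in>W\<^sub>\<theta>. ereal (op_norm_eta A V\<^sub>\<eta> (u - x))"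
  have "w m - w n \<in> V\<^sub>\<eta>" for m n using subset w_in unfolding diff_set_def by blast
  moreover have "?\<sigma> \<noteq> \<infinity>"
    using INF_lower[OF w_in[of 0], of "\<lambda>x. ereal (op_norm_eta A V\<^sub>\<eta> (u - x))"] by auto
  ultimately obtain B where "eventually (\<lambda>n. norm (w n) \<le> B) sequentially"
    using bounded_if_op_norm_eta_bounded[OF V_nonzero _ minimizing] by blast
  then obtain r z where "strict_mono r" "weak_conv (w \<circ> r) z"
    using eventually_bounded_weakly_convergent_subsequence[OF sep] by blast
  moreover have "z \<in> weak_seq_closure W\<^sub>\<theta>"
    using \<open>weak_conv (w \<circ> r) z\<close> w_in unfolding weak_seq_closure_def
    by (intro CollectI exI[of _ "w \<circ> r"]) simp
  moreover have "ereal (op_norm_eta A V\<^sub>\<eta> (u - z')) \<le> ?\<sigma>"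
    if "strict_mono s" "weak_conv (w \<circ> s) z'" for s z'
  proof (rule op_norm_eta_weak_lsc[OF bb V_nonzero])
    show "weak_conv (\<lambda>n. u - (w \<circ> s) n) (u - z')" using that(2) by (rule weak_conv_diff_const)
    show "(\<lambda>n. ereal (op_norm_eta A V\<^sub>\<eta> (u - (w \<circ> s) n))) \<longlonglongrightarrow> ?\<sigma>"
      using LIMSEQ_subseq_LIMSEQ[OF minimizing that(1)] by (simp add: o_def)
  qed
  ultimately show ?thesis by blast
qed

end
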